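(* Let $A,B$ be finite-dimensional quantum systems. Let $\mathcal{E}_1$ be a doubly stochastic quantum operation on $AB$ (trace-preserving and unital, $\mathcal{E}_1(I)=I$), and let $\mathcal{E}_2$ be an arbitrary trace-preserving quantum operation on $AB$. Then $$R_r(\mathcal{E}_1\circ\mathcal{E}_2)\leq R_r(\mathcal{E}_1)+R_r(\mathcal{E}_2)+R_r(\mathcal{E}_1)R_r(\mathcal{E}_2).$$
   Context: A quantum operation (completely positive map) $\mathcal{E}$ on $AB$ is separable if it has an operator-sum representation $\mathcal{E}(\rho)=\sum_j(A_j\otimes B_j)\rho(A_j^\dagger\otimes B_j^\dagger)$. For trace-preserving quantum operations $\mathcal{E},\mathcal{F}$ on $AB$, $R(\mathcal{E}\|\mathcal{F})$ is the minimal $t\geq0$ such that $\mathcal{E}+t\mathcal{F}$ is separable, and the random robustness is $R_r(\mathcal{E})=R(\mathcal{E}\|\mathcal{D})$ with $\mathcal{D}(\rho)=\mathrm{tr}(\rho)\,I/(d_Ad_B)$, $d_A,d_B$ the dimensions of $A,B$. *)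

theory Defs
  imports "HOL-Analysis.Analysis"
begin

text \<open>Operators on a finite-dimensional Hilbert space with orthonormal basis indexed
by the finite type 'n are complex matrices of type complex^'n^'n.
System A is indexed by 'a, system B by 'b, the composite AB by ('a \<times> 'b).\<close>

type_synonym 'n cmat = "complex^'n^'n"

definition cadj :: "('n::finite) cmat \<Rightarrow> 'n cmat" where
  "cadj M = (\<chi> i j. cnj (M $ j $ i))"

definition ktensor :: "('a::finite) cmat \<Rightarrow> ('b::finite) cmat \<Rightarrow> ('a \<times> 'b) cmat" where
  "ktensor X Y = (\<chi> p q. X $ fst p $ fst q * Y $ snd p $ snd q)"

text \<open>Quantum operation (completely positive map) given by a finite operator-sum
(Kraus) representation.\<close>
definition kraus_map :: "('n::finite) cmat list \<Rightarrow> 'n cmat \<Rightarrow> 'n cmat" where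
  "kraus_map Ks \<rho> = (\<Sum>K\<leftarrow>Ks. K ** \<rho> ** cadj K)"

definition quantum_operation :: "(('n::finite) cmat \<Rightarrow> 'n cmat) \<Rightarrow> bool" where
  "quantum_operation E \<longleftrightarrow> (\<exists>Ks. E = kraus_map Ks)"

definition trace_preserving :: "(('n::finite) cmat \<Rightarrow> 'n cmat) \<Rightarrow> bool" where
  "trace_preserving E \<longleftrightarrow> (\<forall>\<rho>. trace (E \<rho>) = trace \<rho>)"

definition tp_operation :: "(('n::finite) cmat \<Rightarrow> 'n cmat) \<Rightarrow> bool" where
  "tp_operation E \<longleftrightarrow> quantum_operation E \<and> trace_preserving E"

definition doubly_stochastic :: "(('n::finite) cmat \<Rightarrow> 'n cmat) \<Rightarrow> bool" where
  "doubly_stochastic E \<longleftrightarrow> tp_operation E \<and> E (mat 1) = mat 1"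

definition separable_op ::
  "((('a::finite) \<times> ('b::finite)) cmat \<Rightarrow> ('a \<times> 'b) cmat) \<Rightarrow> bool" where
  "separable_op E \<longleftrightarrow>
     (\<exists>ABs :: ('a cmat \<times> 'b cmat) list.
        \<forall>\<rho>. E \<rho> = (\<Sum>(X,Y)\<leftarrow>ABs. ktensor X Y ** \<rho> ** cadj (ktensor X Y)))"

definition rel_robustness ::
  "((('a::finite) \<times> ('b::finite)) cmat \<Rightarrow> ('a \<times> 'b) cmat) \<Rightarrow>
   (('a \<times> 'b) cmat \<Rightarrow> ('a \<times> 'b) cmat) \<Rightarrow> real" where
  "rel_robustness E F = Inf {t::real. t \<ge> 0 \<and> separable_op (\<lambda>\<rho>. E \<rho> + t *\<^sub>R F \<rho>)}"

definition depolarizing :: "(('a::finite) \<times> ('b::finite)) cmat \<Rightarrow> ('a \<times> 'b) cmat" where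
  "depolarizing \<rho> = mat (trace \<rho> / of_nat (CARD('a) * CARD('b)))"

definition random_robustness ::
  "((('a::finite) \<times> ('b::finite)) cmat \<Rightarrow> ('a \<times> 'b) cmat) \<Rightarrow> real" where
  "random_robustness E = rel_robustness E (depolarizing :: ('a \<times> 'b) cmat \<Rightarrow> _)"

end

theory Submission
  imports Defs
begin

text \<open>Write D for the depolarizing operation. Since E1 is unital, E1 (D rho) = D rho; since E2 is
trace preserving, D (E2 rho) = D rho; and D (D rho) = D rho. Hence
  (E1 + s D) o (E2 + t D) = E1 o E2 + (s + t + s t) D,
and composition preserves separability, so s + t + s t is admissible for E1 o E2 whenever s and t
are admissible for E1 and E2. Passing to infima gives the bound. The infima range over nonempty
sets (Inf {} is junk) because every quantum operation has finite random robustness: expanding a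
Kraus operator in matrix units, the diagonal terms of its sandwich are product operations, and
each cross term is, by a polarization identity, a separable operation minus sandwiches of matrix
units, each of which is dominated by a multiple of D.\<close>

definition cscale :: "complex \<Rightarrow> ('n::finite) cmat \<Rightarrow> 'n cmat" where
  "cscale c M = (\<chi> i j. c * M $ i $ j)"

definition matrix_unit :: "'n \<Rightarrow> 'n \<Rightarrow> ('n::finite) cmat" where
  "matrix_unit p q = (\<chi> i j. if i = p \<and> j = q then 1 else 0)"

definition sandwich :: "('n::finite) cmat \<Rightarrow> 'n cmat \<Rightarrow> 'n cmat" where
  "sandwich K \<rho> = K ** \<rho> ** cadj K"

lemma cscale_nth [simp]: "cscale c M $ i $ j = c * M $ i $ j"
  by (simp add: cscale_def)

lemma matrix_unit_nth [simp]: "matrix_unit p q $ i $ j = (if i = p \<and> j = q then 1 else 0)"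
  by (simp add: matrix_unit_def)

lemma cadj_nth [simp]: "cadj M $ i $ j = cnj (M $ j $ i)"
  by (simp add: cadj_def)

lemma ktensor_nth [simp]: "ktensor X Y $ p $ q = X $ fst p $ fst q * Y $ snd p $ snd q"
  by (simp add: ktensor_def)

lemma matrix_matrix_mult_nth: "(A ** B) $ i $ j = (\<Sum>k\<in>UNIV. A $ i $ k * B $ k $ j)"
  by (simp add: matrix_matrix_mult_def)

lemma matrix_add_rdistrib: "((A::'a::semiring_1^'n^'m) + B) ** C = A ** C + B ** C"
  by (simp add: vec_eq_iff matrix_matrix_mult_nth algebra_simps sum.distrib)

lemma matrix_diff_ldistrib: "(A::'a::ring_1^'n^'m) ** (B - C) = A ** B - A ** C"
  by (simp add: vec_eq_iff matrix_matrix_mult_nth algebra_simps sum_subtractf)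

lemma matrix_diff_rdistrib: "((A::'a::ring_1^'n^'m) - B) ** C = A ** C - B ** C"
  by (simp add: vec_eq_iff matrix_matrix_mult_nth algebra_simps sum_subtractf)

lemma matrix_sum_ldistrib: "(A::'a::semiring_1^'n^'m) ** sum B S = (\<Sum>x\<in>S. A ** B x)"
  by (simp add: vec_eq_iff matrix_matrix_mult_nth sum_distrib_left) (subst sum.swap, simp)

lemma matrix_sum_rdistrib: "sum A S ** (B::'a::semiring_1^'n^'m) = (\<Sum>x\<in>S. A x ** B)"
  by (simp add: vec_eq_iff matrix_matrix_mult_nth sum_distrib_right) (subst sum.swap, simp)

lemma cscale_mult_left: "cscale c A ** B = cscale c (A ** B)"
  by (simp add: vec_eq_iff matrix_matrix_mult_nth sum_distrib_left mult.assoc)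

lemma cscale_mult_right: "A ** cscale c B = cscale c (A ** B)"
  by (simp add: vec_eq_iff matrix_matrix_mult_nth sum_distrib_left algebra_simps)

lemma cscale_add: "cscale c (A + B) = cscale c A + cscale c B"
  by (simp add: vec_eq_iff algebra_simps)

lemma scaleR_eq_cscale: "r *\<^sub>R (A::('n::finite) cmat) = cscale (of_real r) A"
  by (simp add: vec_eq_iff scaleR_conv_of_real[where 'a=complex])

lemma cadj_add: "cadj (A + B) = cadj A + cadj B"
  by (simp add: vec_eq_iff)

lemma cadj_diff: "cadj (A - B) = cadj A - cadj B"
  by (simp add: vec_eq_iff)

lemma cadj_sum: "cadj (sum A S) = (\<Sum>x\<in>S. cadj (A x))"
  by (simp add: vec_eq_iff)

lemma cadj_cscale: "cadj (cscale c A) = cscale (cnj c) (cadj A)"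
  by (simp add: vec_eq_iff)

lemma cadj_mult: "cadj (A ** B) = cadj B ** cadj A"
  by (simp add: vec_eq_iff matrix_matrix_mult_nth mult.commute)

lemma cadj_matrix_unit: "cadj (matrix_unit p q) = matrix_unit q p"
  by (simp add: vec_eq_iff)

lemma ktensor_mult: "ktensor X Y ** ktensor X' Y' = ktensor (X ** X') (Y ** Y')"
proof -
  have "(\<Sum>k\<in>UNIV. X $ a $ fst k * Y $ b $ snd k * (X' $ fst k $ a' * Y' $ snd k $ b')) =
        (\<Sum>k\<in>UNIV. X $ a $ k * X' $ k $ a') * (\<Sum>k\<in>UNIV. Y $ b $ k * Y' $ k $ b')"
    for a b a' b'
    by (simp add: sum_product UNIV_Times_UNIV[symmetric] sum.cartesian_product algebra_simps
        case_prod_unfold del: UNIV_Times_UNIV)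
  then show ?thesis
    by (simp add: vec_eq_iff matrix_matrix_mult_nth)
qed

lemma ktensor_cscale_left: "ktensor (cscale c X) Y = cscale c (ktensor X Y)"
  by (simp add: vec_eq_iff algebra_simps)

lemma ktensor_matrix_unit:
  "ktensor (matrix_unit a a') (matrix_unit b b') = matrix_unit (a, b) (a', b')"
  by (auto simp: vec_eq_iff)

lemma matrix_unit_decomposition:
  "K = (\<Sum>(p, q)\<in>UNIV. cscale (K $ p $ q) (matrix_unit p q))"
proof -
  have "(\<Sum>(p, q)\<in>UNIV. K $ p $ q * (if i = p \<and> j = q then 1 else 0)) = K $ i $ j" for i j
  proof -
    have "(\<Sum>(p, q)\<in>UNIV. K $ p $ q * (if i = p \<and> j = q then 1 else 0))
        = (\<Sum>x\<in>UNIV. if x = (i, j) then K $ i $ j else 0)"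
      by (rule sum.cong) (auto simp: case_prod_unfold prod_eq_iff)
    then show ?thesis by simp
  qed
  then show ?thesis
    by (simp add: vec_eq_iff case_prod_unfold del: mult_zero_right mult_1_right)
qed

lemma matrix_unit_mult: "matrix_unit p q ** M = (\<chi> i j. if i = p then M $ q $ j else 0)"
  by (simp add: vec_eq_iff matrix_matrix_mult_nth if_distrib if_distribR sum.delta cong: if_cong)

lemma mult_matrix_unit: "M ** matrix_unit p q = (\<chi> i j. if j = q then M $ i $ p else 0)"
  by (simp add: vec_eq_iff matrix_matrix_mult_nth if_distrib if_distribR sum.delta cong: if_cong)

lemma sandwich_matrix_unit:
  "sandwich (matrix_unit p q) \<rho> = (\<chi> i j. if i = p \<and> j = p then \<rho> $ q $ q else 0)"
  by (simp add: sandwich_def cadj_matrix_unit matrix_unit_mult mult_matrix_unit vec_eq_iff)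

lemma sum_sandwich_matrix_units:
  "(\<Sum>(p, q)\<in>UNIV. sandwich (matrix_unit p q) \<rho>) = mat (trace (\<rho>::('n::finite) cmat))"
proof -
  have "(\<Sum>(p, q)\<in>UNIV. if i = p \<and> j = p then \<rho> $ q $ q else 0) = (if i = j then trace \<rho> else 0)"
    for i j :: 'n
  proof -
    have "(\<Sum>(p, q)\<in>UNIV. if i = p \<and> j = p then \<rho> $ q $ q else 0)
        = (\<Sum>p\<in>UNIV. if i = p \<and> j = p then trace \<rho> else 0)"
      unfolding UNIV_Times_UNIV[symmetric] sum.cartesian_product[symmetric]
      by (rule sum.cong) (auto simp: trace_def)
    also have "\<dots> = (if i = j then trace \<rho> else 0)"
      by (cases "i = j") (auto intro: sum.neutral)
    finally show ?thesis .
  qed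
  then show ?thesis
    by (simp add: vec_eq_iff sandwich_matrix_unit mat_def case_prod_unfold)
qed

lemma sandwich_add_right: "sandwich K (A + B) = sandwich K A + sandwich K B"
  by (simp add: sandwich_def matrix_add_ldistrib matrix_add_rdistrib)

lemma sandwich_zero_right [simp]: "sandwich K 0 = 0"
  by (simp add: sandwich_def)

lemma sandwich_cscale_right: "sandwich K (cscale c A) = cscale c (sandwich K A)"
  by (simp add: sandwich_def cscale_mult_left cscale_mult_right)

lemma sandwich_mult: "sandwich (K ** L) \<rho> = sandwich K (sandwich L \<rho>)"
  by (simp add: sandwich_def cadj_mult matrix_mul_assoc)

lemma sandwich_cscale: "sandwich (cscale c K) \<rho> = (cmod c)\<^sup>2 *\<^sub>R sandwich K \<rho>"
  by (simp add: sandwich_def cadj_cscale cscale_mult_left cscale_mult_right scaleR_eq_cscale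
      vec_eq_iff algebra_simps flip: complex_norm_square)

lemma kraus_map_Nil [simp]: "kraus_map [] \<rho> = 0"
  by (simp add: kraus_map_def)

lemma kraus_map_Cons [simp]: "kraus_map (K # Ks) \<rho> = sandwich K \<rho> + kraus_map Ks \<rho>"
  by (simp add: kraus_map_def sandwich_def)

lemma kraus_map_append: "kraus_map (Ks @ Ls) \<rho> = kraus_map Ks \<rho> + kraus_map Ls \<rho>"
  by (induction Ks) (simp_all add: add.assoc)

lemma kraus_map_add: "kraus_map Ks (A + B) = kraus_map Ks A + kraus_map Ks B"
  by (induction Ks) (simp_all add: sandwich_add_right algebra_simps)

lemma kraus_map_cscale: "kraus_map Ks (cscale c A) = cscale c (kraus_map Ks A)"
  by (induction Ks) (simp_all add: sandwich_cscale_right cscale_add vec_eq_iff)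

lemma kraus_map_scaleR: "kraus_map Ks (r *\<^sub>R A) = r *\<^sub>R kraus_map Ks A"
  by (simp add: scaleR_eq_cscale kraus_map_cscale)

lemma scaleR_kraus_map:
  assumes "0 \<le> r"
  shows "r *\<^sub>R kraus_map Ks \<rho> = kraus_map (map (cscale (of_real (sqrt r))) Ks) \<rho>"
  using assms by (induction Ks) (simp_all add: sandwich_cscale scaleR_add_right)

lemma sandwich_kraus_map: "sandwich K (kraus_map Ls \<rho>) = kraus_map (map ((**) K) Ls) \<rho>"
  by (induction Ls) (simp_all add: sandwich_add_right sandwich_mult)

lemma kraus_map_comp:
  "kraus_map Ks (kraus_map Ls \<rho>) = kraus_map (concat (map (\<lambda>K. map ((**) K) Ls) Ks)) \<rho>"
  by (induction Ks) (simp_all add: sandwich_kraus_map kraus_map_append)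

lemma separable_op_iff_kraus_map:
  "separable_op E \<longleftrightarrow> (\<exists>L. E = kraus_map (map (\<lambda>(X, Y). ktensor X Y) L))"
  by (simp add: separable_op_def kraus_map_def fun_eq_iff case_prod_unfold o_def)

lemma separable_op_sandwich_ktensor: "separable_op (sandwich (ktensor X Y))"
  unfolding separable_op_iff_kraus_map by (rule exI[of _ "[(X, Y)]"]) (simp add: fun_eq_iff)

lemma separable_op_zero: "separable_op (\<lambda>\<rho>. 0)"
  unfolding separable_op_iff_kraus_map by (rule exI[of _ "[]"]) (simp add: fun_eq_iff)

lemma separable_op_add:
  assumes "separable_op E" and "separable_op F"
  shows "separable_op (\<lambda>\<rho>. E \<rho> + F \<rho>)"
proof -
  from assms obtain L M where "E = kraus_map (map (\<lambda>(X, Y). ktensor X Y) L)"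
    and "F = kraus_map (map (\<lambda>(X, Y). ktensor X Y) M)"
    by (auto simp: separable_op_iff_kraus_map)
  then show ?thesis
    unfolding separable_op_iff_kraus_map
    by (intro exI[of _ "L @ M"]) (simp add: fun_eq_iff kraus_map_append)
qed

lemma separable_op_scaleR:
  assumes "separable_op E" and "0 \<le> r"
  shows "separable_op (\<lambda>\<rho>. r *\<^sub>R E \<rho>)"
proof -
  from assms(1) obtain L where "E = kraus_map (map (\<lambda>(X, Y). ktensor X Y) L)"
    by (auto simp: separable_op_iff_kraus_map)
  then show ?thesis
    unfolding separable_op_iff_kraus_map
    by (intro exI[of _ "map (\<lambda>(X, Y). (cscale (of_real (sqrt r)) X, Y)) L"])
      (simp add: fun_eq_iff scaleR_kraus_map[OF assms(2)] case_prod_unfold ktensor_cscale_left o_def)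
qed

lemma separable_op_sum:
  assumes "finite S" and "\<And>x. x \<in> S \<Longrightarrow> separable_op (E x)"
  shows "separable_op (\<lambda>\<rho>. \<Sum>x\<in>S. E x \<rho>)"
  using assms by (induction S rule: finite_induct) (simp_all add: separable_op_zero separable_op_add)

lemma separable_op_comp:
  assumes "separable_op E" and "separable_op F"
  shows "separable_op (\<lambda>\<rho>. E (F \<rho>))"
proof -
  from assms obtain L M where "E = kraus_map (map (\<lambda>(X, Y). ktensor X Y) L)"
    and "F = kraus_map (map (\<lambda>(X, Y). ktensor X Y) M)"
    by (auto simp: separable_op_iff_kraus_map)
  then show ?thesis
    unfolding separable_op_iff_kraus_map
    by (intro exI[of _ "concat (map (\<lambda>(X, Y). map (\<lambda>(X', Y'). (X ** X', Y ** Y')) M) L)"])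
      (simp add: fun_eq_iff kraus_map_comp map_concat case_prod_unfold ktensor_mult o_def)
qed

lemma separable_op_sandwich_matrix_unit:
  "separable_op (sandwich (matrix_unit p q :: ('a::finite \<times> 'b::finite) cmat))"
  using separable_op_sandwich_ktensor[of "matrix_unit (fst p) (fst q)" "matrix_unit (snd p) (snd q)"]
  by (simp add: ktensor_matrix_unit)

lemma depolarizing_eq_cscale:
  "(depolarizing \<rho> :: ('a::finite \<times> 'b::finite) cmat)
     = cscale (trace \<rho> / of_nat (CARD('a) * CARD('b))) (mat 1)"
  by (simp add: depolarizing_def vec_eq_iff mat_def)

lemma depolarizing_add: "depolarizing (A + B) = depolarizing A + depolarizing B"
  by (simp add: depolarizing_def trace_add vec_eq_iff mat_def add_divide_distrib)

lemma trace_scaleR: "trace (r *\<^sub>R (A::'a::real_algebra_1^'n^'n)) = r *\<^sub>R trace A"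
  by (simp add: trace_def scaleR_sum_right)

lemma depolarizing_scaleR: "depolarizing (r *\<^sub>R A) = r *\<^sub>R depolarizing A"
  by (simp add: depolarizing_def trace_scaleR vec_eq_iff mat_def
      scaleR_conv_of_real[where 'a=complex])

lemma depolarizing_trace_preserving:
  "trace_preserving E \<Longrightarrow> depolarizing (E \<rho>) = depolarizing \<rho>"
  by (simp add: depolarizing_def trace_preserving_def)

lemma depolarizing_idem: "depolarizing (depolarizing \<rho>) = depolarizing \<rho>"
  by (simp add: depolarizing_def trace_def mat_def card_prod)

lemma kraus_map_depolarizing:
  "kraus_map Ks (mat 1) = mat 1 \<Longrightarrow> kraus_map Ks (depolarizing \<rho>) = depolarizing \<rho>"
  by (simp add: depolarizing_eq_cscale kraus_map_cscale)

lemma scaleR_card_depolarizing: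
  "real (CARD('a) * CARD('b)) *\<^sub>R depolarizing \<rho>
     = (\<Sum>(p, q)\<in>UNIV. sandwich (matrix_unit p q) (\<rho> :: ('a::finite \<times> 'b::finite) cmat))"
  by (simp add: sum_sandwich_matrix_units depolarizing_def vec_eq_iff mat_def
      scaleR_conv_of_real[where 'a=complex])

definition robustness_witnesses ::
  "((('a::finite) \<times> ('b::finite)) cmat \<Rightarrow> ('a \<times> 'b) cmat) \<Rightarrow> real set" where
  "robustness_witnesses E = {t. 0 \<le> t \<and> separable_op (\<lambda>\<rho>. E \<rho> + t *\<^sub>R depolarizing \<rho>)}"

definition finite_random_robustness ::
  "((('a::finite) \<times> ('b::finite)) cmat \<Rightarrow> ('a \<times> 'b) cmat) \<Rightarrow> bool" where
  "finite_random_robustness E \<longleftrightarrow> robustness_witnesses E \<noteq> {}"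

lemma random_robustness_eq_Inf: "random_robustness E = Inf (robustness_witnesses E)"
  by (simp add: random_robustness_def rel_robustness_def robustness_witnesses_def)

lemma finite_random_robustness_iff:
  "finite_random_robustness E \<longleftrightarrow>
     (\<exists>t\<ge>0. separable_op (\<lambda>\<rho>. E \<rho> + t *\<^sub>R depolarizing \<rho>))"
  by (auto simp: finite_random_robustness_def robustness_witnesses_def)

lemma finite_random_robustness_separable:
  "separable_op E \<Longrightarrow> finite_random_robustness E"
  unfolding finite_random_robustness_iff by (intro exI[of _ 0]) (simp add: eta_contract_eq)

lemma finite_random_robustness_add:
  assumes "finite_random_robustness E" and "finite_random_robustness F"
  shows "finite_random_robustness (\<lambda>\<rho>. E \<rho> + F \<rho>)"
proof -
  from assms obtain s t where "0 \<le> s" "separable_op (\<lambda>\<rho>. E \<rho> + s *\<^sub>R depolarizing \<rho>)"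
    and "0 \<le> t" "separable_op (\<lambda>\<rho>. F \<rho> + t *\<^sub>R depolarizing \<rho>)"
    by (auto simp: finite_random_robustness_iff)
  moreover from this have "separable_op (\<lambda>\<rho>. E \<rho> + F \<rho> + (s + t) *\<^sub>R depolarizing \<rho>)"
    using separable_op_add[of "\<lambda>\<rho>. E \<rho> + s *\<^sub>R depolarizing \<rho>" "\<lambda>\<rho>. F \<rho> + t *\<^sub>R depolarizing \<rho>"]
    by (simp add: scaleR_add_left algebra_simps)
  ultimately show ?thesis
    unfolding finite_random_robustness_iff by (intro exI[of _ "s + t"]) simp
qed

lemma finite_random_robustness_scaleR:
  assumes "finite_random_robustness E" and "0 \<le> r"
  shows "finite_random_robustness (\<lambda>\<rho>. r *\<^sub>R E \<rho>)"
proof -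
  from assms(1) obtain t where "0 \<le> t" "separable_op (\<lambda>\<rho>. E \<rho> + t *\<^sub>R depolarizing \<rho>)"
    by (auto simp: finite_random_robustness_iff)
  moreover from this have "separable_op (\<lambda>\<rho>. r *\<^sub>R E \<rho> + (r * t) *\<^sub>R depolarizing \<rho>)"
    using separable_op_scaleR[of "\<lambda>\<rho>. E \<rho> + t *\<^sub>R depolarizing \<rho>", OF _ assms(2)]
    by (simp add: scaleR_add_right)
  ultimately show ?thesis
    unfolding finite_random_robustness_iff using assms(2) by (intro exI[of _ "r * t"]) simp
qed

lemma finite_random_robustness_sum:
  assumes "finite S" and "\<And>x. x \<in> S \<Longrightarrow> finite_random_robustness (E x)"
  shows "finite_random_robustness (\<lambda>\<rho>. \<Sum>x\<in>S. E x \<rho>)"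
  using assms
  by (induction S rule: finite_induct)
    (simp_all add: finite_random_robustness_add finite_random_robustness_separable separable_op_zero)

lemma finite_random_robustness_neg_sandwich_cscale_matrix_unit:
  "finite_random_robustness
     (\<lambda>\<rho>. - sandwich (cscale c (matrix_unit p q) :: ('a::finite \<times> 'b::finite) cmat) \<rho>)"
proof -
  let ?d = "real (CARD('a) * CARD('b))"
  let ?rest = "\<lambda>\<rho>. \<Sum>(p', q')\<in>UNIV - {(p, q)}. sandwich (matrix_unit p' q') (\<rho> :: ('a \<times> 'b) cmat)"
  have "?d *\<^sub>R depolarizing \<rho> = sandwich (matrix_unit p q) \<rho> + ?rest \<rho>" for \<rho>
    unfolding scaleR_card_depolarizing by (subst sum.remove[of UNIV "(p, q)"]) auto
  then have "- sandwich (matrix_unit p q) \<rho> + ?d *\<^sub>R depolarizing \<rho> = ?rest \<rho>" for \<rho>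
    by simp
  moreover have "separable_op ?rest"
    by (intro separable_op_sum) (auto simp: case_prod_unfold separable_op_sandwich_matrix_unit)
  ultimately have "finite_random_robustness (\<lambda>\<rho>. - sandwich (matrix_unit p q :: ('a \<times> 'b) cmat) \<rho>)"
    unfolding finite_random_robustness_iff by (intro exI[of _ ?d]) simp
  from finite_random_robustness_scaleR[OF this, of "(cmod c)\<^sup>2"] show ?thesis
    by (simp add: sandwich_cscale)
qed

lemma sandwich_add:
  "sandwich (A + B) \<rho> = sandwich A \<rho> + sandwich B \<rho> + (A ** \<rho> ** cadj B + B ** \<rho> ** cadj A)"
  by (simp add: sandwich_def cadj_add matrix_add_ldistrib matrix_add_rdistrib algebra_simps)

lemma sandwich_parallelogram:
  "sandwich (A + B) \<rho> + sandwich (A - B) \<rho> = 2 *\<^sub>R (sandwich A \<rho> + sandwich B \<rho>)"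
  by (simp add: sandwich_def cadj_add cadj_diff matrix_add_ldistrib matrix_add_rdistrib
      matrix_diff_ldistrib matrix_diff_rdistrib scaleR_2 algebra_simps)

lemma sandwich_polarization_ktensor:
  "sandwich (ktensor (X + X') (Y + Y')) \<rho> + sandwich (ktensor (X - X') (Y - Y')) \<rho>
   + sandwich (ktensor (X + cscale \<i> X') (Y - cscale \<i> Y')) \<rho>
   + sandwich (ktensor (X - cscale \<i> X') (Y + cscale \<i> Y')) \<rho>
   = 4 *\<^sub>R (sandwich (ktensor X Y + ktensor X' Y') \<rho> + sandwich (ktensor X' Y) \<rho>
            + sandwich (ktensor X Y') \<rho>)"
proof -
  define P R T where "P = ktensor X Y + ktensor X' Y'" and "R = ktensor X' Y" and "T = ktensor X Y'"
  have "ktensor (X + X') (Y + Y') = P + (R + T)" "ktensor (X - X') (Y - Y') = P - (R + T)"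
    "ktensor (X + cscale \<i> X') (Y - cscale \<i> Y') = P + cscale \<i> (R - T)"
    "ktensor (X - cscale \<i> X') (Y + cscale \<i> Y') = P - cscale \<i> (R - T)"
    by (simp_all add: P_def R_def T_def vec_eq_iff algebra_simps)
  then have "sandwich (ktensor (X + X') (Y + Y')) \<rho> + sandwich (ktensor (X - X') (Y - Y')) \<rho>
      + sandwich (ktensor (X + cscale \<i> X') (Y - cscale \<i> Y')) \<rho>
      + sandwich (ktensor (X - cscale \<i> X') (Y + cscale \<i> Y')) \<rho>
    = (sandwich (P + (R + T)) \<rho> + sandwich (P - (R + T)) \<rho>)
      + (sandwich (P + cscale \<i> (R - T)) \<rho> + sandwich (P - cscale \<i> (R - T)) \<rho>)"
    by (simp add: add.assoc)
  also have "\<dots> = 2 *\<^sub>R (sandwich P \<rho> + sandwich (R + T) \<rho>)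
      + 2 *\<^sub>R (sandwich P \<rho> + sandwich (R - T) \<rho>)"
    by (simp only: sandwich_parallelogram sandwich_cscale) simp
  also have "\<dots> = 2 *\<^sub>R (2 *\<^sub>R sandwich P \<rho> + (sandwich (R + T) \<rho> + sandwich (R - T) \<rho>))"
    by (simp only: scaleR_2 add_ac)
  also have "\<dots> = (2 * 2) *\<^sub>R (sandwich P \<rho> + (sandwich R \<rho> + sandwich T \<rho>))"
    by (simp only: sandwich_parallelogram scaleR_add_right[symmetric] scaleR_scaleR)
  also have "\<dots> = 4 *\<^sub>R (sandwich P \<rho> + sandwich R \<rho> + sandwich T \<rho>)"
    by (simp add: add.assoc)
  finally show ?thesis
    by (simp only: P_def R_def T_def)
qed

lemma finite_random_robustness_sandwich_add_ktensor:
  assumes "finite_random_robustness (\<lambda>\<rho>. - sandwich (ktensor X' Y) \<rho>)"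
    and "finite_random_robustness (\<lambda>\<rho>. - sandwich (ktensor X Y') \<rho>)"
  shows "finite_random_robustness (sandwich (ktensor X Y + ktensor X' Y'))"
proof -
  let ?Z = "\<lambda>\<rho>. sandwich (ktensor (X + X') (Y + Y')) \<rho> + sandwich (ktensor (X - X') (Y - Y')) \<rho>
     + sandwich (ktensor (X + cscale \<i> X') (Y - cscale \<i> Y')) \<rho>
     + sandwich (ktensor (X - cscale \<i> X') (Y + cscale \<i> Y')) \<rho>"
  have "separable_op ?Z"
    by (intro separable_op_add separable_op_sandwich_ktensor)
  then have "finite_random_robustness (\<lambda>\<rho>. (1 / 4) *\<^sub>R ?Z \<rho>)"
    by (intro finite_random_robustness_scaleR finite_random_robustness_separable) simp_all
  then have "finite_random_robustness (\<lambda>\<rho>. (1 / 4) *\<^sub>R ?Z \<rho>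
      + - sandwich (ktensor X' Y) \<rho> + - sandwich (ktensor X Y') \<rho>)"
    by (intro finite_random_robustness_add assms)
  then show ?thesis
    by (simp add: sandwich_polarization_ktensor scaleR_add_right eta_contract_eq)
qed

lemma finite_random_robustness_cross_cscale_matrix_units:
  fixes c c' :: complex and p q p' q' :: "'a::finite \<times> 'b::finite"
  defines "A \<equiv> cscale c (matrix_unit p q)" and "B \<equiv> cscale c' (matrix_unit p' q')"
  shows "finite_random_robustness (\<lambda>\<rho>. A ** \<rho> ** cadj B + B ** \<rho> ** cadj A)"
proof -
  have "finite_random_robustness (sandwich (A + B))"
    using finite_random_robustness_sandwich_add_ktensor[where
        X = "cscale c (matrix_unit (fst p) (fst q))" and Y = "matrix_unit (snd p) (snd q)" and
        X' = "cscale c' (matrix_unit (fst p') (fst q'))" and Y' = "matrix_unit (snd p') (snd q')"]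
    by (simp add: A_def B_def ktensor_cscale_left ktensor_matrix_unit
        finite_random_robustness_neg_sandwich_cscale_matrix_unit)
  then have "finite_random_robustness
      (\<lambda>\<rho>. sandwich (A + B) \<rho> + - sandwich A \<rho> + - sandwich B \<rho>)"
    unfolding A_def B_def
    by (intro finite_random_robustness_add finite_random_robustness_neg_sandwich_cscale_matrix_unit)
  then show ?thesis
    by (simp add: sandwich_add)
qed

lemma finite_random_robustness_sandwich_sum:
  fixes A :: "'i \<Rightarrow> ('a::finite \<times> 'b::finite) cmat"
  assumes "finite S"
    and "\<And>x. x \<in> S \<Longrightarrow> finite_random_robustness (sandwich (A x))"
    and "\<And>x y. x \<in> S \<Longrightarrow> y \<in> S \<Longrightarrow>
           finite_random_robustness (\<lambda>\<rho>. A x ** \<rho> ** cadj (A y) + A y ** \<rho> ** cadj (A x))"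
  shows "finite_random_robustness (sandwich (\<Sum>x\<in>S. A x))"
  using assms
proof (induction S rule: finite_induct)
  case empty
  have "sandwich (0 :: ('a \<times> 'b) cmat) = (\<lambda>\<rho>. 0)"
    by (simp add: sandwich_def fun_eq_iff)
  then show ?case
    unfolding sum.empty by (metis finite_random_robustness_separable separable_op_zero)
next
  case (insert x F)
  have "sandwich (A x + sum A F) \<rho> = sandwich (A x) \<rho> + sandwich (sum A F) \<rho>
      + (\<Sum>y\<in>F. A x ** \<rho> ** cadj (A y) + A y ** \<rho> ** cadj (A x))" for \<rho>
    by (simp add: sandwich_add cadj_sum matrix_sum_ldistrib matrix_sum_rdistrib sum.distrib)
  moreover have "finite_random_robustness
      (\<lambda>\<rho>. \<Sum>y\<in>F. A x ** \<rho> ** cadj (A y) + A y ** \<rho> ** cadj (A x))"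
    using insert by (intro finite_random_robustness_sum) simp_all
  then have "finite_random_robustness (\<lambda>\<rho>. sandwich (A x) \<rho> + sandwich (sum A F) \<rho>
      + (\<Sum>y\<in>F. A x ** \<rho> ** cadj (A y) + A y ** \<rho> ** cadj (A x)))"
    using insert by (intro finite_random_robustness_add) (simp_all add: eta_contract_eq)
  ultimately show ?case
    using insert(1,2) by (simp flip: eta_contract_eq)
qed

lemma finite_random_robustness_sandwich:
  "finite_random_robustness (sandwich (K :: ('a::finite \<times> 'b::finite) cmat))"
proof -
  have "finite_random_robustness (sandwich (cscale c (matrix_unit p q) :: ('a \<times> 'b) cmat))" for c p q
  proof -
    have "sandwich (cscale c (matrix_unit p q)) = (\<lambda>\<rho>. (cmod c)\<^sup>2 *\<^sub>R sandwich (matrix_unit p q) \<rho>)"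
      by (simp add: fun_eq_iff sandwich_cscale)
    then show ?thesis
      by (simp add: finite_random_robustness_separable separable_op_scaleR
          separable_op_sandwich_matrix_unit)
  qed
  then have "finite_random_robustness
      (sandwich (\<Sum>(p, q)\<in>UNIV. cscale (K $ p $ q) (matrix_unit p q)))"
    by (intro finite_random_robustness_sandwich_sum)
      (auto simp: case_prod_unfold finite_random_robustness_cross_cscale_matrix_units)
  then show ?thesis
    by (simp only: matrix_unit_decomposition[of K, symmetric])
qed

lemma finite_random_robustness_quantum_operation:
  "quantum_operation E \<Longrightarrow> finite_random_robustness (E :: ('a::finite \<times> 'b::finite) cmat \<Rightarrow> _)"
proof -
  have "finite_random_robustness (kraus_map (Ks :: ('a \<times> 'b) cmat list))" for Ks
  proof (induction Ks)
    case Nil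
    then show ?case
      by (simp add: finite_random_robustness_separable separable_op_zero flip: eta_contract_eq)
  next
    case (Cons K Ks)
    then show ?case
      using finite_random_robustness_add[OF finite_random_robustness_sandwich Cons]
      by (simp flip: eta_contract_eq)
  qed
  then show "quantum_operation E \<Longrightarrow> finite_random_robustness E"
    by (auto simp: quantum_operation_def)
qed

lemma robustness_witnesses_comp:
  assumes "doubly_stochastic E1" and "trace_preserving E2"
    and "s \<in> robustness_witnesses E1" and "t \<in> robustness_witnesses E2"
  shows "s + t + s * t \<in> robustness_witnesses (E1 \<circ> E2)"
proof -
  obtain Ks where E1: "E1 = kraus_map Ks" and unital: "kraus_map Ks (mat 1) = mat 1"
    using assms(1) by (auto simp: doubly_stochastic_def tp_operation_def quantum_operation_def)
  have "E1 (E2 \<rho>) + (s + t + s * t) *\<^sub>R depolarizing \<rho>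
      = E1 (E2 \<rho> + t *\<^sub>R depolarizing \<rho>) + s *\<^sub>R depolarizing (E2 \<rho> + t *\<^sub>R depolarizing \<rho>)"
    for \<rho>
    using assms(2)
    by (simp add: E1 kraus_map_add kraus_map_scaleR kraus_map_depolarizing[OF unital]
        depolarizing_add depolarizing_scaleR depolarizing_idem depolarizing_trace_preserving
        algebra_simps)
  moreover have "separable_op (\<lambda>\<rho>. E1 (E2 \<rho> + t *\<^sub>R depolarizing \<rho>)
      + s *\<^sub>R depolarizing (E2 \<rho> + t *\<^sub>R depolarizing \<rho>))"
    using assms(3,4) separable_op_comp[of "\<lambda>\<sigma>. E1 \<sigma> + s *\<^sub>R depolarizing \<sigma>"]
    by (simp add: robustness_witnesses_def)
  ultimately show ?thesis
    using assms(3,4) by (simp add: robustness_witnesses_def)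
qed

lemma le_cInf_add_mult:
  fixes r :: real and S T :: "real set"
  assumes "S \<noteq> {}" and "T \<noteq> {}" and "\<And>s. s \<in> S \<Longrightarrow> 0 \<le> s" and "\<And>t. t \<in> T \<Longrightarrow> 0 \<le> t"
    and "\<And>s t. s \<in> S \<Longrightarrow> t \<in> T \<Longrightarrow> r \<le> s + t + s * t"
  shows "r \<le> Inf S + Inf T + Inf S * Inf T"
proof -
  have Inf_S_nonneg: "0 \<le> Inf S"
    using assms(1,3) by (rule cInf_greatest)
  have "(r - Inf S) / (1 + Inf S) \<le> t" if t: "t \<in> T" for t
  proof -
    have "(r - t) / (1 + t) \<le> Inf S"
    proof (rule cInf_greatest[OF assms(1)])
      fix s
      assume "s \<in> S"
      then have "r - t \<le> s * (1 + t)"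
        using assms(5) t by (simp add: algebra_simps)
      then show "(r - t) / (1 + t) \<le> s"
        using assms(4)[OF t] by (simp add: divide_le_eq)
    qed
    then have "r - Inf S \<le> t * (1 + Inf S)"
      using assms(4)[OF t] by (simp add: divide_le_eq algebra_simps)
    then show ?thesis
      using Inf_S_nonneg by (simp add: divide_le_eq)
  qed
  then have "(r - Inf S) / (1 + Inf S) \<le> Inf T"
    using assms(2) by (intro cInf_greatest)
  then show ?thesis
    using Inf_S_nonneg by (simp add: divide_le_eq algebra_simps)
qed

theorem proposition5:
  fixes E1 E2 :: "(('a::finite) \<times> ('b::finite)) cmat \<Rightarrow> ('a \<times> 'b) cmat"
  assumes "doubly_stochastic E1"
    and "tp_operation E2"
  shows "random_robustness (E1 \<circ> E2)
           \<le> random_robustness E1 + random_robustness E2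
              + random_robustness E1 * random_robustness E2"
proof -
  have "robustness_witnesses E1 \<noteq> {}" and "robustness_witnesses E2 \<noteq> {}"
    using assms finite_random_robustness_quantum_operation
    by (auto simp: doubly_stochastic_def tp_operation_def finite_random_robustness_def)
  moreover have "Inf (robustness_witnesses (E1 \<circ> E2)) \<le> s + t + s * t"
    if "s \<in> robustness_witnesses E1" and "t \<in> robustness_witnesses E2" for s t
    using assms that
    by (intro cInf_lower robustness_witnesses_comp bdd_belowI[of _ 0])
      (auto simp: tp_operation_def robustness_witnesses_def)
  ultimately show ?thesis
    unfolding random_robustness_eq_Inf
    by (intro le_cInf_add_mult) (auto simp: robustness_witnesses_def)
qed

end
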